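(* The AllSet framework, as well as its extension with residual connections, are special cases of the MultiSet framework. Precisely: given any functions $f_{\mathcal{V}\to\mathcal{E}}, f_{\mathcal{E}\to\mathcal{V}}$, each permutation invariant in its first argument, defining an AllSet scheme $$\bm z_e^{(t+1)} = f_{\mathcal{V}\to\mathcal{E}}\big(\{\bm x_u^{(t)}\}_{u\in e};\ \bm z_e^{(t)}\big),\qquad \bm x_v^{(t+1)} = f_{\mathcal{E}\to\mathcal{V}}\big(\{\bm z_e^{(t+1)}\}_{e\in\mathcal{E}_v};\ \bm x_v^{(t)}\big)$$ (or the extended AllSet scheme in which the node update is instead $\bm x_v^{(t+1)} = f_{\mathcal{E}\to\mathcal{V}}\big(\{\bm z_e^{(t+1)}\}_{e\in\mathcal{E}_v};\ \{\bm x_v^{(k)}\}_{k=0}^{t}\big)$), run for $T$ steps, there is a choice of the MultiSet functions such that the MultiSet scheme reproduces exactly the hyperedge representations $\bm z_e^{(t)}$ and final node representations $\bm x_v^{(T)}$ of that AllSet (respectively extended AllSet) scheme.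
   Context: A hypergraph is $\mathcal{G}=(\mathcal{V},\mathcal{E})$ with each hyperedge $e\in\mathcal{E}$ a subset of $\mathcal{V}$; $\mathcal{E}_v=\{e\in\mathcal{E}:v\in e\}$ and $d_v=|\mathcal{E}_v|$. A function is called a multiset function if it is permutation invariant with respect to each of its (set-valued) arguments in turn. MultiSet framework: each hyperedge $e$ has a representation $\bm z_e^{(t)}\in\mathbb{R}^d$ at step $t$; each node $v$ has one representation $\bm x_{v,e}^{(t)}\in\mathbb{R}^f$ for each hyperedge $e\in\mathcal{E}_v$, and $\mathbb{X}_v^{(t)}=\{\bm x_{v,e}^{(t)}\}_{e\in\mathcal{E}_v}$. The updates are $$\bm z_e^{(t+1)}=f_{\mathcal{V}\to\mathcal{E}}\big(\{\mathbb{X}_u^{(t)}\}_{u\in e};\ \bm z_e^{(t)}\big),\qquad \bm x_{v,e}^{(t+1)}=f_{\mathcal{E}\to\mathcal{V}}\big(\{\bm z_{e}^{(t+1)}\}_{e\in\mathcal{E}_v};\ \{\mathbb{X}_v^{(k)}\}_{k=0}^{t}\big),$$ and after $T$ steps a readout $\bm x_v^{(T)}=f_{\mathcal{V}\to\mathcal{V}}\big(\{\mathbb{X}_v^{(k)}\}_{k=0}^{T}\big)$, where $f_{\mathcal{V}\to\mathcal{E}}, f_{\mathcal{E}\to\mathcal{V}}$ are multiset functions with respect to their first input and $f_{\mathcal{V}\to\mathcal{V}}$ is a multiset function. *)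

theory Defs
  imports "HOL-Analysis.Analysis" "HOL-Library.Multiset"
begin

definition incident :: "'v set set \<Rightarrow> 'v \<Rightarrow> 'v set set" where
  "incident E v = {e \<in> E. v \<in> e}"

definition hypergraph :: "'v set \<Rightarrow> 'v set set \<Rightarrow> bool" where
  "hypergraph V E \<longleftrightarrow> finite V \<and> (\<forall>e\<in>E. e \<subseteq> V)"

text \<open>AllSet scheme. Functions permutation invariant in their first argument are
  represented as functions of a multiset. State at step t: (z^(t), x^(t)).\<close>
fun allset ::
  "('x multiset \<Rightarrow> 'z \<Rightarrow> 'z) \<Rightarrow> ('z multiset \<Rightarrow> 'x \<Rightarrow> 'x) \<Rightarrow> 'v set set \<Rightarrow>
   ('v set \<Rightarrow> 'z) \<Rightarrow> ('v \<Rightarrow> 'x) \<Rightarrow> nat \<Rightarrow> ('v set \<Rightarrow> 'z) \<times> ('v \<Rightarrow> 'x)" where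
  "allset fVE fEV E z0 x0 0 = (z0, x0)"
| "allset fVE fEV E z0 x0 (Suc t) =
     (let (z, x) = allset fVE fEV E z0 x0 t;
          z' = (\<lambda>e. fVE (image_mset x (mset_set e)) (z e));
          x' = (\<lambda>v. fEV (image_mset z' (mset_set (incident E v))) (x v))
      in (z', x'))"

fun ext_allset ::
  "('x multiset \<Rightarrow> 'z \<Rightarrow> 'z) \<Rightarrow> ('z multiset \<Rightarrow> 'x list \<Rightarrow> 'x) \<Rightarrow> 'v set set \<Rightarrow>
   ('v set \<Rightarrow> 'z) \<Rightarrow> ('v \<Rightarrow> 'x) \<Rightarrow> nat \<Rightarrow> ('v set \<Rightarrow> 'z) \<times> ('v \<Rightarrow> 'x list)" where
  "ext_allset fVE fEV E z0 x0 0 = (z0, (\<lambda>v. [x0 v]))"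
| "ext_allset fVE fEV E z0 x0 (Suc t) =
     (let (z, xs) = ext_allset fVE fEV E z0 x0 t;
          z' = (\<lambda>e. fVE (image_mset (\<lambda>u. last (xs u)) (mset_set e)) (z e));
          x' = (\<lambda>v. fEV (image_mset z' (mset_set (incident E v))) (xs v))
      in (z', (\<lambda>v. xs v @ [x' v])))"

definition Xof :: "'v set set \<Rightarrow> ('v \<Rightarrow> 'v set \<Rightarrow> 'x) \<Rightarrow> 'v \<Rightarrow> 'x multiset" where
  "Xof E x v = image_mset (x v) (mset_set (incident E v))"

text \<open>The first argument of gVE is the multiset {X_u}_{u in e};
  the second argument of gEV is the list [X_v^(0), ..., X_v^(t)].\<close>
fun multiset_scheme ::
  "('x multiset multiset \<Rightarrow> 'z \<Rightarrow> 'z) \<Rightarrow> ('z multiset \<Rightarrow> 'x multiset list \<Rightarrow> 'x) \<Rightarrow>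
   'v set set \<Rightarrow> ('v set \<Rightarrow> 'z) \<Rightarrow> ('v \<Rightarrow> 'v set \<Rightarrow> 'x) \<Rightarrow> nat \<Rightarrow>
   ('v set \<Rightarrow> 'z) \<times> ('v \<Rightarrow> 'v set \<Rightarrow> 'x) list" where
  "multiset_scheme gVE gEV E z0 x0 0 = (z0, [x0])"
| "multiset_scheme gVE gEV E z0 x0 (Suc t) =
     (let (z, xh) = multiset_scheme gVE gEV E z0 x0 t;
          z' = (\<lambda>e. gVE (image_mset (Xof E (last xh)) (mset_set e)) (z e));
          x' = (\<lambda>v e. gEV (image_mset z' (mset_set (incident E v))) (map (\<lambda>x. Xof E x v) xh))
      in (z', xh @ [x']))"

definition multiset_readout ::
  "('x multiset list \<Rightarrow> 'x) \<Rightarrow> 'v set set \<Rightarrow> ('v \<Rightarrow> 'v set \<Rightarrow> 'x) list \<Rightarrow> 'v \<Rightarrow> 'x" where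
  "multiset_readout gVV E xh v = gVV (map (\<lambda>x. Xof E x v) xh)"

end

theory Submission
  imports Defs
begin

text \<open>AllSet is the extended AllSet scheme whose node update only looks at the last entry of
  the history, so it suffices to simulate the extended scheme. Started from x_{v,e} = x_v, the
  MultiSet scheme keeps all copies x_{v,e} of a node representation equal, because its node
  update does not depend on e. Hence each X_v is the value x_v repeated |E_v| times, which is
  nonempty for every vertex lying in a hyperedge; the MultiSet functions read x_v off as the
  unique element of X_v and pass it to the AllSet functions.\<close>

lemma allset_eq_ext_allset_last:
  "allset fVE fEV E z0 x0 t =
     (fst (ext_allset fVE (\<lambda>Z xs. fEV Z (last xs)) E z0 x0 t),
      \<lambda>v. last (snd (ext_allset fVE (\<lambda>Z xs. fEV Z (last xs)) E z0 x0 t) v))"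
  by (induction t) (simp_all add: split_beta Let_def)

definition common_elem :: "'a multiset \<Rightarrow> 'a" where
  "common_elem X = the_elem (set_mset X)"

lemma common_elem_replicate_mset: "n \<noteq> 0 \<Longrightarrow> common_elem (replicate_mset n c) = c"
  by (simp add: common_elem_def)

definition decoded_VE :: "('x multiset \<Rightarrow> 'z \<Rightarrow> 'z) \<Rightarrow> 'x multiset multiset \<Rightarrow> 'z \<Rightarrow> 'z" where
  "decoded_VE f M = f (image_mset common_elem M)"

definition decoded_EV ::
  "('z multiset \<Rightarrow> 'x list \<Rightarrow> 'x) \<Rightarrow> 'z multiset \<Rightarrow> 'x multiset list \<Rightarrow> 'x" where
  "decoded_EV f Z Xs = f Z (map common_elem Xs)"

definition decoded_readout :: "'x multiset list \<Rightarrow> 'x" where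
  "decoded_readout Xs = last (map common_elem Xs)"

lemma finite_edges_hypergraph: "hypergraph V E \<Longrightarrow> finite E"
  unfolding hypergraph_def by (meson Pow_iff finite_Pow_iff finite_subset subsetI)

lemma incident_subset: "incident E v \<subseteq> E"
  by (simp add: incident_def)

lemma incident_nonempty: "e \<in> E \<Longrightarrow> u \<in> e \<Longrightarrow> incident E u \<noteq> {}"
  by (auto simp: incident_def)

lemma Xof_const:
  assumes "\<And>e. x v e = c"
  shows "Xof E x v = replicate_mset (card (incident E v)) c"
proof -
  have "x v = (\<lambda>_. c)"
    using assms by blast
  then show ?thesis
    by (simp add: Xof_def image_mset_const_eq)
qed

lemma decode_Xof_history:
  assumes "finite E" "incident E v \<noteq> {}" "\<And>e. map (\<lambda>x. x v e) xh = ys"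
  shows "map (\<lambda>x. common_elem (Xof E x v)) xh = ys"
proof -
  have const: "x v e = x v undefined" if "x \<in> set xh" for x e
    using assms(3)[of e] assms(3)[of undefined] that by (metis map_eq_conv)
  have card: "card (incident E v) \<noteq> 0"
    using assms(1,2) finite_subset[OF incident_subset] by (simp add: card_eq_0_iff)
  have "map (\<lambda>x. common_elem (Xof E x v)) xh = map (\<lambda>x. x v undefined) xh"
  proof (rule map_cong[OF refl])
    fix x
    assume "x \<in> set xh"
    then have "Xof E x v = replicate_mset (card (incident E v)) (x v undefined)"
      by (intro Xof_const const)
    then show "common_elem (Xof E x v) = x v undefined"
      using card by (simp add: common_elem_replicate_mset)
  qed
  then show ?thesis
    using assms(3) by simp
qed

lemma length_multiset_scheme:
  "length (snd (multiset_scheme gVE gEV E z0 x0 t)) = Suc t"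
  by (induction t) (simp_all add: split_beta Let_def)

lemma multiset_scheme_simulates_ext_allset:
  assumes "finite E"
  shows "(\<forall>e\<in>E. fst (multiset_scheme (decoded_VE hVE) (decoded_EV hEV) E z0 (\<lambda>v e. x0 v) t) e
                  = fst (ext_allset hVE hEV E z0 x0 t) e)
       \<and> (\<forall>v e. incident E v \<noteq> {} \<longrightarrow>
            map (\<lambda>x. x v e) (snd (multiset_scheme (decoded_VE hVE) (decoded_EV hEV) E z0 (\<lambda>v e. x0 v) t))
              = snd (ext_allset hVE hEV E z0 x0 t) v)"
proof (induction t)
  case 0
  show ?case by simp
next
  case (Suc t)
  obtain z xh where MS: "multiset_scheme (decoded_VE hVE) (decoded_EV hEV) E z0 (\<lambda>v e. x0 v) t = (z, xh)"
    by fastforce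
  obtain za xs where EA: "ext_allset hVE hEV E z0 x0 t = (za, xs)"
    by fastforce
  have edges: "\<forall>e\<in>E. z e = za e"
    and nodes: "\<And>v e. incident E v \<noteq> {} \<Longrightarrow> map (\<lambda>x. x v e) xh = xs v"
    using Suc.IH by (simp_all add: MS EA)
  have "xh \<noteq> []"
    using length_multiset_scheme[of "decoded_VE hVE" "decoded_EV hEV" E z0 "\<lambda>v e. x0 v" t]
    by (auto simp: MS)
  have decode: "map (\<lambda>x. common_elem (Xof E x v)) xh = xs v" if "incident E v \<noteq> {}" for v
    using decode_Xof_history[OF assms that nodes[OF that]] .
  define z' where "z' = (\<lambda>e. hVE (image_mset (\<lambda>u. last (xs u)) (mset_set e)) (za e))"
  have edge_step: "decoded_VE hVE (image_mset (Xof E (last xh)) (mset_set e)) (z e) = z' e"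
    if "e \<in> E" for e
  proof -
    have "common_elem (Xof E (last xh) u) = last (xs u)" if "u \<in># mset_set e" for u
    proof -
      have "u \<in> e"
        using that by (cases "finite e") auto
      with \<open>e \<in> E\<close> have "incident E u \<noteq> {}"
        by (rule incident_nonempty)
      from decode[OF this] show ?thesis
        using \<open>xh \<noteq> []\<close> by (metis last_map)
    qed
    then have "image_mset common_elem (image_mset (Xof E (last xh)) (mset_set e))
        = image_mset (\<lambda>u. last (xs u)) (mset_set e)"
      by (simp add: image_mset.compositionality o_def cong: image_mset_cong)
    then show ?thesis
      using edges that by (simp add: decoded_VE_def z'_def)
  qed
  show ?case
  proof (intro conjI ballI allI impI)
    fix e
    assume "e \<in> E"
    then show "fst (multiset_scheme (decoded_VE hVE) (decoded_EV hEV) E z0 (\<lambda>v e. x0 v) (Suc t)) e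
        = fst (ext_allset hVE hEV E z0 x0 (Suc t)) e"
      using edge_step by (simp add: MS EA Let_def z'_def)
  next
    fix v e
    assume "incident E v \<noteq> {}"
    have "image_mset (\<lambda>e. decoded_VE hVE (image_mset (Xof E (last xh)) (mset_set e)) (z e))
        (mset_set (incident E v)) = image_mset z' (mset_set (incident E v))"
      using edge_step finite_subset[OF incident_subset assms]
      by (intro image_mset_cong) (auto simp: incident_def)
    then show "map (\<lambda>x. x v e) (snd (multiset_scheme (decoded_VE hVE) (decoded_EV hEV) E z0 (\<lambda>v e. x0 v) (Suc t)))
        = snd (ext_allset hVE hEV E z0 x0 (Suc t)) v"
      using nodes[OF \<open>incident E v \<noteq> {}\<close>] decode[OF \<open>incident E v \<noteq> {}\<close>]
      by (simp add: MS EA Let_def z'_def decoded_EV_def o_def)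
  qed
qed

lemma multiset_readout_decoded:
  assumes "finite E" "incident E v \<noteq> {}"
  shows "multiset_readout decoded_readout E
           (snd (multiset_scheme (decoded_VE hVE) (decoded_EV hEV) E z0 (\<lambda>v e. x0 v) t)) v
         = last (snd (ext_allset hVE hEV E z0 x0 t) v)"
proof -
  have "map (\<lambda>x. common_elem (Xof E x v))
          (snd (multiset_scheme (decoded_VE hVE) (decoded_EV hEV) E z0 (\<lambda>v e. x0 v) t))
        = snd (ext_allset hVE hEV E z0 x0 t) v"
    using multiset_scheme_simulates_ext_allset[OF assms(1)] assms(2)
    by (intro decode_Xof_history[OF assms]) blast
  then show ?thesis
    by (simp add: multiset_readout_def decoded_readout_def o_def)
qed

lemma multiset_scheme_realizes_ext_allset:
  "\<exists>gVE gEV gVV.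
      \<forall>(V :: 'v set) E z0 x0.
        hypergraph V E \<longrightarrow> (\<forall>v\<in>V. incident E v \<noteq> {}) \<longrightarrow>
        (\<forall>t. \<forall>e\<in>E. fst (multiset_scheme gVE gEV E z0 (\<lambda>v e. x0 v) t) e
                      = fst (ext_allset hVE hEV E z0 x0 t) e) \<and>
        (\<forall>T. \<forall>v\<in>V. multiset_readout gVV E (snd (multiset_scheme gVE gEV E z0 (\<lambda>v e. x0 v) T)) v
                      = last (snd (ext_allset hVE hEV E z0 x0 T) v))"
proof (intro exI[where x = "decoded_VE hVE"] exI[where x = "decoded_EV hEV"]
    exI[where x = decoded_readout] allI impI conjI ballI)
  fix V :: "'v set" and E z0 x0 t e T v
  assume "hypergraph V E" and incident_V: "\<forall>v\<in>V. incident E v \<noteq> {}"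
  from \<open>hypergraph V E\<close> have "finite E"
    by (rule finite_edges_hypergraph)
  show "e \<in> E \<Longrightarrow> fst (multiset_scheme (decoded_VE hVE) (decoded_EV hEV) E z0 (\<lambda>v e. x0 v) t) e
      = fst (ext_allset hVE hEV E z0 x0 t) e"
    using multiset_scheme_simulates_ext_allset[OF \<open>finite E\<close>] by blast
  show "v \<in> V \<Longrightarrow> multiset_readout decoded_readout E
      (snd (multiset_scheme (decoded_VE hVE) (decoded_EV hEV) E z0 (\<lambda>v e. x0 v) T)) v
      = last (snd (ext_allset hVE hEV E z0 x0 T) v)"
    using multiset_readout_decoded[OF \<open>finite E\<close>] incident_V by blast
qed

theorem proposition2:
  fixes fVE :: "(real ^ 'f) multiset \<Rightarrow> real ^ 'd \<Rightarrow> real ^ 'd"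
    and fEV :: "(real ^ 'd) multiset \<Rightarrow> real ^ 'f \<Rightarrow> real ^ 'f"
    and hVE :: "(real ^ 'f) multiset \<Rightarrow> real ^ 'd \<Rightarrow> real ^ 'd"
    and hEV :: "(real ^ 'd) multiset \<Rightarrow> (real ^ 'f) list \<Rightarrow> real ^ 'f"
  shows
   "(\<exists>gVE gEV gVV.
      \<forall>(V :: 'v set) E z0 x0.
        hypergraph V E \<longrightarrow> (\<forall>v\<in>V. incident E v \<noteq> {}) \<longrightarrow>
        (\<forall>t. \<forall>e\<in>E. fst (multiset_scheme gVE gEV E z0 (\<lambda>v e. x0 v) t) e
                      = fst (allset fVE fEV E z0 x0 t) e) \<and>
        (\<forall>T. \<forall>v\<in>V. multiset_readout gVV E (snd (multiset_scheme gVE gEV E z0 (\<lambda>v e. x0 v) T)) v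
                      = snd (allset fVE fEV E z0 x0 T) v))
    \<and>
    (\<exists>gVE gEV gVV.
      \<forall>(V :: 'v set) E z0 x0.
        hypergraph V E \<longrightarrow> (\<forall>v\<in>V. incident E v \<noteq> {}) \<longrightarrow>
        (\<forall>t. \<forall>e\<in>E. fst (multiset_scheme gVE gEV E z0 (\<lambda>v e. x0 v) t) e
                      = fst (ext_allset hVE hEV E z0 x0 t) e) \<and>
        (\<forall>T. \<forall>v\<in>V. multiset_readout gVV E (snd (multiset_scheme gVE gEV E z0 (\<lambda>v e. x0 v) T)) v
                      = last (snd (ext_allset hVE hEV E z0 x0 T) v)))"
  using multiset_scheme_realizes_ext_allset[of fVE "\<lambda>Z xs. fEV Z (last xs)"]
    multiset_scheme_realizes_ext_allset[of hVE hEV]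
  by (simp add: allset_eq_ext_allset_last)

end
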